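(* Let $W\in\mathcal{P}(\mathcal{Y}|\mathcal{X})$ be a symmetric channel with $R_{\mathrm{cr}}<C(W)$ and no all-zero column, let $R_\infty<R<C(W)$, and let $q_R$, $\mathrm{e}_{\mathrm{SP}}(\cdot,R)$ be as in the context. (i) For every $\lambda\in\mathbb{R}$, $M_x(\lambda)=\sum_{y\in\mathrm{supp}(W(\cdot|x))}W(y|x)^{1-\lambda}q_R(y)^\lambda$ is finite and does not depend on $x\in\mathcal{X}$. (ii) Fix $x_{\mathrm o}\in\mathcal{X}$ and let $\mathbf{x}_{\mathrm o}^N$ be the $N$-tuple with all entries $x_{\mathrm o}$. For every $(N,R)$ code with ideal feedback (encoding maps $f_n$), every message $m$ and every $r\ge0$ for which $\mathrm{e}_{\mathrm{SP}}(r,R)$ is defined, $$P_{\mathbf{Y}^N|M}\{\mathcal{S}(m,r)\mid m\}=W\{\mathcal{S}(\mathbf{x}_{\mathrm o}^N,r)\mid\mathbf{x}_{\mathrm o}^N\},$$ where $\mathcal{S}(\mathbf{x}^N,r)=\{\mathbf{y}^N:\frac1N\sum_n\ln\frac{W(y_n|x_n)}{q_R(y_n)}\le r-\mathrm{e}_{\mathrm{SP}}(r,R)\}$ and $\mathcal{S}(m,r)=\{\mathbf{y}^N:\frac1N\sum_n\ln\frac{W(y_n|f_n(m,\mathbf{y}^{n-1}))}{q_R(y_n)}\le r-\mathrm{e}_{\mathrm{SP}}(r,R)\}$.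
   Context: $\mathcal{X},\mathcal{Y}$ finite; symmetric (Gallager): outputs partitionable into subsets within each of which every row of the transition submatrix is a permutation of every other row and every column of every other column. $U_{\mathcal{X}}$ uniform. $\mathrm{E}_{\mathrm{SP}}(r,U_{\mathcal{X}})=\min_{V:I(U_{\mathcal{X}};V)\le r}D(V\|W|U_{\mathcal{X}})$, $D(V\|W|Q)=\sum_xQ(x)D(V(\cdot|x)\|W(\cdot|x))$ and for $q\in\mathcal{P}(\mathcal{Y})$, $D(V\|q|Q)=\sum_xQ(x)D(V(\cdot|x)\|q)$. $R_\infty$, $R_{\mathrm{cr}}$, $C(W)$: infinite-sphere-packing rate, critical rate, capacity. $\rho_R=-\partial_r\mathrm{E}_{\mathrm{SP}}(r,U_{\mathcal{X}})|_{r=R}$ and $q_R(y)\propto(\sum_xU_{\mathcal{X}}(x)W(y|x)^{1/(1+\rho_R)})^{1+\rho_R}$ (normalized). For $r\le R$ (with the infimum below over a nonempty set), $\mathrm{e}_{\mathrm{SP}}(r,R)=\inf_{V:D(V\|q_R|U_{\mathcal{X}})\le r}D(V\|W|U_{\mathcal{X}})$. A code with ideal feedback has $f_n:\mathcal{M}\times\mathcal{Y}^{n-1}\to\mathcal{X}$ and output law $P_{\mathbf{Y}^N|M}(\mathbf{y}^N|m)=\prod_nW(y_n|f_n(m,\mathbf{y}^{n-1}))$. *)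

theory Defs
  imports "HOL-Analysis.Analysis"
begin

text \<open>Channels are stochastic matrices W x y = W(y|x) over finite alphabets.\<close>

definition stochastic :: "('a \<Rightarrow> 'b::finite \<Rightarrow> real) \<Rightarrow> bool" where
  "stochastic V \<longleftrightarrow> (\<forall>x y. 0 \<le> V x y) \<and> (\<forall>x. (\<Sum>y\<in>UNIV. V x y) = 1)"

definition pdist :: "('a::finite \<Rightarrow> real) \<Rightarrow> bool" where
  "pdist Q \<longleftrightarrow> (\<forall>x. 0 \<le> Q x) \<and> (\<Sum>x\<in>UNIV. Q x) = 1"

definition unif :: "'a::finite \<Rightarrow> real" where
  "unif x = 1 / real (card (UNIV :: 'a set))"

definition gallager_symmetric :: "('a::finite \<Rightarrow> 'b::finite \<Rightarrow> real) \<Rightarrow> bool" where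
  "gallager_symmetric W \<longleftrightarrow>
     (\<exists>P :: 'b set set.
        (\<forall>B\<in>P. B \<noteq> {}) \<and> (\<forall>B\<in>P. \<forall>B'\<in>P. B \<noteq> B' \<longrightarrow> B \<inter> B' = {}) \<and> \<Union>P = UNIV \<and>
        (\<forall>B\<in>P.
           (\<forall>x x'. \<exists>\<sigma>. bij_betw \<sigma> B B \<and> (\<forall>y\<in>B. W x' y = W x (\<sigma> y))) \<and>
           (\<forall>y\<in>B. \<forall>y'\<in>B. \<exists>\<pi>. bij \<pi> \<and> (\<forall>x. W x y' = W (\<pi> x) y))))"

definition outd :: "('a::finite \<Rightarrow> real) \<Rightarrow> ('a \<Rightarrow> 'b \<Rightarrow> real) \<Rightarrow> 'b \<Rightarrow> real" where
  "outd Q V y = (\<Sum>x\<in>UNIV. Q x * V x y)"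

definition MI :: "('a::finite \<Rightarrow> real) \<Rightarrow> ('a \<Rightarrow> 'b::finite \<Rightarrow> real) \<Rightarrow> real" where
  "MI Q V = (\<Sum>x\<in>UNIV. \<Sum>y\<in>UNIV.
      if Q x * V x y > 0 then Q x * V x y * ln (V x y / outd Q V y) else 0)"

definition kl :: "('b::finite \<Rightarrow> real) \<Rightarrow> ('b \<Rightarrow> real) \<Rightarrow> ereal" where
  "kl p q = (if \<forall>y. p y > 0 \<longrightarrow> q y > 0
             then ereal (\<Sum>y\<in>UNIV. if p y > 0 then p y * ln (p y / q y) else 0)
             else \<infinity>)"

definition condD :: "('a::finite \<Rightarrow> real) \<Rightarrow> ('a \<Rightarrow> 'b::finite \<Rightarrow> real) \<Rightarrow> ('a \<Rightarrow> 'b \<Rightarrow> real) \<Rightarrow> ereal" where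
  "condD Q V W = (\<Sum>x\<in>UNIV. ereal (Q x) * kl (V x) (W x))"

definition condDq :: "('a::finite \<Rightarrow> real) \<Rightarrow> ('a \<Rightarrow> 'b::finite \<Rightarrow> real) \<Rightarrow> ('b \<Rightarrow> real) \<Rightarrow> ereal" where
  "condDq Q V q = (\<Sum>x\<in>UNIV. ereal (Q x) * kl (V x) q)"

definition Esp :: "('a::finite \<Rightarrow> 'b::finite \<Rightarrow> real) \<Rightarrow> real \<Rightarrow> ereal" where
  "Esp W r = (INF V\<in>{V. stochastic V \<and> MI unif V \<le> r}. condD unif V W)"

definition Rinf :: "('a::finite \<Rightarrow> 'b::finite \<Rightarrow> real) \<Rightarrow> real" where
  "Rinf W = Inf {r. Esp W r < \<infinity>}"

definition E0 :: "('a::finite \<Rightarrow> 'b::finite \<Rightarrow> real) \<Rightarrow> real \<Rightarrow> ('a \<Rightarrow> real) \<Rightarrow> real" where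
  "E0 W \<rho> Q = - ln (\<Sum>y\<in>UNIV. (\<Sum>x\<in>UNIV. Q x * W x y powr (1 / (1 + \<rho>))) powr (1 + \<rho>))"

text \<open>Critical rate: derivative of E_0(rho, Q) at rho = 1 for the optimal input
  (the uniform one for symmetric channels).\<close>
definition Rcr :: "('a::finite \<Rightarrow> 'b::finite \<Rightarrow> real) \<Rightarrow> real" where
  "Rcr W = deriv (\<lambda>\<rho>. E0 W \<rho> unif) 1"

definition capacity :: "('a::finite \<Rightarrow> 'b::finite \<Rightarrow> real) \<Rightarrow> real" where
  "capacity W = Sup {MI Q W | Q. pdist Q}"

definition rhoR :: "('a::finite \<Rightarrow> 'b::finite \<Rightarrow> real) \<Rightarrow> real \<Rightarrow> real" where
  "rhoR W R = - deriv (\<lambda>r. real_of_ereal (Esp W r)) R"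

definition qR :: "('a::finite \<Rightarrow> 'b::finite \<Rightarrow> real) \<Rightarrow> real \<Rightarrow> 'b \<Rightarrow> real" where
  "qR W R y =
     (let \<rho> = rhoR W R;
          g = (\<lambda>y. (\<Sum>x\<in>UNIV. unif x * W x y powr (1 / (1 + \<rho>))) powr (1 + \<rho>))
      in g y / (\<Sum>y'\<in>UNIV. g y'))"

definition esp_set :: "('a::finite \<Rightarrow> 'b::finite \<Rightarrow> real) \<Rightarrow> real \<Rightarrow> real \<Rightarrow> ('a \<Rightarrow> 'b \<Rightarrow> real) set" where
  "esp_set W R r = {V. stochastic V \<and> condDq unif V (qR W R) \<le> ereal r}"

definition eSP :: "('a::finite \<Rightarrow> 'b::finite \<Rightarrow> real) \<Rightarrow> real \<Rightarrow> real \<Rightarrow> ereal" where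
  "eSP W R r = (INF V\<in>esp_set W R r. condD unif V W)"

definition epow :: "real \<Rightarrow> real \<Rightarrow> ereal" where
  "epow a b = (if a = 0 then (if b = 0 then 1 else if b > 0 then 0 else \<infinity>) else ereal (a powr b))"

definition Mgf :: "('a::finite \<Rightarrow> 'b::finite \<Rightarrow> real) \<Rightarrow> real \<Rightarrow> 'a \<Rightarrow> real \<Rightarrow> ereal" where
  "Mgf W R x lam = (\<Sum>y\<in>{y. W x y > 0}. ereal (W x y powr (1 - lam)) * epow (qR W R y) lam)"

definition llr :: "('a \<Rightarrow> 'b \<Rightarrow> real) \<Rightarrow> ('b \<Rightarrow> real) \<Rightarrow> 'a \<Rightarrow> 'b \<Rightarrow> ereal" where
  "llr W q x y = (if W x y = 0 then -\<infinity> else if q y = 0 then \<infinity> else ereal (ln (W x y / q y)))"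

text \<open>S(m,r) for a feedback encoder f (index n = 0..N-1, f n m uses the first n outputs).\<close>
definition Sfb :: "('a::finite \<Rightarrow> 'b::finite \<Rightarrow> real) \<Rightarrow> real \<Rightarrow> nat
     \<Rightarrow> (nat \<Rightarrow> 'm \<Rightarrow> 'b list \<Rightarrow> 'a) \<Rightarrow> 'm \<Rightarrow> real \<Rightarrow> 'b list set" where
  "Sfb W R N f m r = {ys. length ys = N \<and>
     ereal (1 / real N) * (\<Sum>n<N. llr W (qR W R) (f n m (take n ys)) (ys ! n)) \<le> ereal r - eSP W R r}"

definition Sseq :: "('a::finite \<Rightarrow> 'b::finite \<Rightarrow> real) \<Rightarrow> real \<Rightarrow> nat \<Rightarrow> 'a list \<Rightarrow> real \<Rightarrow> 'b list set" where
  "Sseq W R N xs r = {ys. length ys = N \<and>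
     ereal (1 / real N) * (\<Sum>n<N. llr W (qR W R) (xs ! n) (ys ! n)) \<le> ereal r - eSP W R r}"

definition Pfb :: "('a \<Rightarrow> 'b \<Rightarrow> real) \<Rightarrow> nat \<Rightarrow> (nat \<Rightarrow> 'm \<Rightarrow> 'b list \<Rightarrow> 'a) \<Rightarrow> 'm \<Rightarrow> 'b list set \<Rightarrow> real" where
  "Pfb W N f m A = (\<Sum>ys\<in>A. \<Prod>n<N. W (f n m (take n ys)) (ys ! n))"

definition Pseq :: "('a \<Rightarrow> 'b \<Rightarrow> real) \<Rightarrow> nat \<Rightarrow> 'a list \<Rightarrow> 'b list set \<Rightarrow> real" where
  "Pseq W N xs A = (\<Sum>ys\<in>A. \<Prod>n<N. W (xs ! n) (ys ! n))"

end

theory Submission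
  imports Defs
begin

text \<open>
  Inside each block of the output partition of a symmetric channel the rows are permutations of
  one another, and \<open>q\<^sub>R(y)\<close> depends on the column \<open>W(y|\<cdot>)\<close> only up to a permutation of the
  inputs. Hence, for every input \<open>x\<close>, the family of pairs \<open>(W(y|x), q\<^sub>R(y))\<close>, \<open>y \<in> \<Y>\<close>, is the
  same up to reindexing, and every sum \<open>\<Sum>\<^sub>y \<Phi>(W(y|x), q\<^sub>R(y))\<close> is independent of \<open>x\<close>; this is (i).
  For (ii), split off the first output: whatever the encoder sends first, the first output and
  its log-likelihood ratio have the same joint law, and by induction on the block length the
  conditional law of the remaining log-likelihood ratios does not depend on the encoder either.
\<close>

definition respects_column_perms :: "('x \<Rightarrow> 'y \<Rightarrow> real) \<Rightarrow> ('y \<Rightarrow> 'c) \<Rightarrow> bool" where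
  "respects_column_perms W q \<longleftrightarrow>
     (\<forall>y y' \<pi>. bij \<pi> \<and> (\<forall>x. W x y' = W (\<pi> x) y) \<longrightarrow> q y' = q y)"

lemma gallager_symmetric_sum_row_independent:
  fixes W :: "'x::finite \<Rightarrow> 'y::finite \<Rightarrow> real" and \<Phi> :: "real \<Rightarrow> 'c \<Rightarrow> 'd::comm_monoid_add"
  assumes "gallager_symmetric W" and q: "respects_column_perms W q"
  shows "(\<Sum>y\<in>UNIV. \<Phi> (W x y) (q y)) = (\<Sum>y\<in>UNIV. \<Phi> (W x' y) (q y))"
proof -
  obtain P :: "'y set set" where
      disjoint: "\<forall>B\<in>P. \<forall>B'\<in>P. B \<noteq> B' \<longrightarrow> B \<inter> B' = {}" and cover: "\<Union>P = UNIV"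
    and blocks: "\<forall>B\<in>P. (\<forall>x x'. \<exists>\<sigma>. bij_betw \<sigma> B B \<and> (\<forall>y\<in>B. W x' y = W x (\<sigma> y))) \<and>
      (\<forall>y\<in>B. \<forall>y'\<in>B. \<exists>\<pi>. bij \<pi> \<and> (\<forall>x. W x y' = W (\<pi> x) y))"
    using assms(1) unfolding gallager_symmetric_def by (elim exE conjE) (rule that; assumption)
  have sum_blocks: "(\<Sum>y\<in>UNIV. g y) = (\<Sum>B\<in>P. \<Sum>y\<in>B. g y)" for g :: "'y \<Rightarrow> 'd"
    using sum.Union_disjoint[of P g] disjoint cover by (auto intro: finite_subset[of _ "Pow UNIV"])
  have block: "(\<Sum>y\<in>B. \<Phi> (W x y) (q y)) = (\<Sum>y\<in>B. \<Phi> (W x' y) (q y))" if "B \<in> P" for B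
  proof -
    obtain \<sigma> where \<sigma>: "bij_betw \<sigma> B B" and row: "\<forall>y\<in>B. W x' y = W x (\<sigma> y)"
      using blocks \<open>B \<in> P\<close> by blast
    have columns: "\<forall>y\<in>B. \<forall>y'\<in>B. \<exists>\<pi>. bij \<pi> \<and> (\<forall>x. W x y' = W (\<pi> x) y)"
      using blocks \<open>B \<in> P\<close> by blast
    have "q (\<sigma> y) = q y" if "y \<in> B" for y
    proof -
      have "\<sigma> y \<in> B"
        using bij_betwE[OF \<sigma>] \<open>y \<in> B\<close> by blast
      then obtain \<pi> where "bij \<pi>" "\<forall>x. W x (\<sigma> y) = W (\<pi> x) y"
        using columns \<open>y \<in> B\<close> by blast
      then show ?thesis
        using q unfolding respects_column_perms_def by blast
    qed
    then have "(\<Sum>y\<in>B. \<Phi> (W x' y) (q y)) = (\<Sum>y\<in>B. \<Phi> (W x (\<sigma> y)) (q (\<sigma> y)))"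
      using row by (intro sum.cong) auto
    also have "\<dots> = (\<Sum>y\<in>B. \<Phi> (W x y) (q y))"
      using sum.reindex_bij_betw[OF \<sigma>] by simp
    finally show ?thesis ..
  qed
  show ?thesis
    unfolding sum_blocks by (rule sum.cong[OF refl]) (rule block)
qed

lemma respects_column_perms_qR:
  fixes W :: "'x::finite \<Rightarrow> 'y::finite \<Rightarrow> real"
  shows "respects_column_perms W (qR W R)"
  unfolding respects_column_perms_def
proof (intro allI impI, elim conjE)
  fix y y' and \<pi> :: "'x \<Rightarrow> 'x"
  assume "bij \<pi>" and column: "\<forall>x. W x y' = W (\<pi> x) y"
  have "(\<Sum>x\<in>UNIV. unif x * W x y' powr a) = (\<Sum>x\<in>UNIV. unif x * W x y powr a)" for a
  proof -
    have "(\<Sum>x\<in>UNIV. unif x * W x y' powr a) = (\<Sum>x\<in>UNIV. unif (\<pi> x) * W (\<pi> x) y powr a)"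
      using column by (simp add: unif_def)
    also have "\<dots> = (\<Sum>x\<in>UNIV. unif x * W x y powr a)"
      using sum.reindex_bij_betw[of \<pi> UNIV UNIV "\<lambda>x. unif x * W x y powr a"] \<open>bij \<pi>\<close>
      by (simp add: bij_def)
    finally show ?thesis .
  qed
  then show "qR W R y' = qR W R y"
    unfolding qR_def Let_def by simp
qed

lemma qR_pos:
  fixes W :: "'x::finite \<Rightarrow> 'y::finite \<Rightarrow> real"
  assumes "W x y \<noteq> 0"
  shows "0 < qR W R y"
proof -
  define g where "g = (\<lambda>y. (\<Sum>x\<in>UNIV. unif x * W x y powr (1 / (1 + rhoR W R))) powr (1 + rhoR W R))"
  have "0 < unif x * W x y powr (1 / (1 + rhoR W R))"
    using assms by (simp add: unif_def)
  also have "\<dots> \<le> (\<Sum>x\<in>UNIV. unif x * W x y powr (1 / (1 + rhoR W R)))"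
    by (rule member_le_sum) (simp_all add: unif_def)
  finally have "0 < g y"
    unfolding g_def by simp
  moreover have "g y \<le> (\<Sum>y'\<in>UNIV. g y')"
    by (rule member_le_sum) (simp_all add: g_def)
  moreover have "qR W R y = g y / (\<Sum>y'\<in>UNIV. g y')"
    unfolding qR_def Let_def g_def ..
  ultimately show ?thesis
    by simp
qed

lemma Mgf_eq_sum_UNIV:
  fixes W :: "'x::finite \<Rightarrow> 'y::finite \<Rightarrow> real"
  shows "Mgf W R x lam =
     (\<Sum>y\<in>UNIV. if 0 < W x y then ereal (W x y powr (1 - lam)) * epow (qR W R y) lam else 0)"
  unfolding Mgf_def by (subst sum.inter_filter[symmetric]) simp_all

lemma Mgf_finite:
  fixes W :: "'x::finite \<Rightarrow> 'y::finite \<Rightarrow> real"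
  shows "Mgf W R x lam \<noteq> \<infinity>"
proof -
  have "Mgf W R x lam = (\<Sum>y\<in>{y. 0 < W x y}. ereal (W x y powr (1 - lam) * qR W R y powr lam))"
    unfolding Mgf_def
  proof (rule sum.cong)
    fix y assume "y \<in> {y. 0 < W x y}"
    then have "0 < qR W R y"
      using qR_pos[of W x y R] by simp
    then show "ereal (W x y powr (1 - lam)) * epow (qR W R y) lam =
        ereal (W x y powr (1 - lam) * qR W R y powr lam)"
      by (simp add: epow_def)
  qed simp
  then show ?thesis
    by (simp add: sum_ereal)
qed

lemma sum_lists_length_Suc:
  "(\<Sum>ys\<in>{ys :: 'y::finite list. length ys = Suc N}. F ys) =
   (\<Sum>y\<in>UNIV. \<Sum>ys\<in>{ys. length ys = N}. F (y # ys))"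
proof -
  have "{ys :: 'y list. length ys = Suc N} = (\<lambda>(y, ys). y # ys) ` (UNIV \<times> {ys. length ys = N})"
    by (force simp: length_Suc_conv)
  moreover have "inj_on (\<lambda>(y, ys). y # ys) (UNIV \<times> {ys :: 'y list. length ys = N})"
    by (auto simp: inj_on_def)
  ultimately show ?thesis
    by (simp add: sum.reindex sum.cartesian_product case_prod_unfold)
qed

definition fb_llr_expectation ::
    "('x \<Rightarrow> 'y::finite \<Rightarrow> real) \<Rightarrow> ('y \<Rightarrow> real) \<Rightarrow> nat \<Rightarrow> (nat \<Rightarrow> 'y list \<Rightarrow> 'x)
      \<Rightarrow> (ereal \<Rightarrow> real) \<Rightarrow> real" where
  "fb_llr_expectation W q N f h = (\<Sum>ys\<in>{ys. length ys = N}.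
      (\<Prod>n<N. W (f n (take n ys)) (ys ! n)) * h (\<Sum>n<N. llr W q (f n (take n ys)) (ys ! n)))"

lemma fb_llr_expectation_0: "fb_llr_expectation W q 0 f h = h 0"
  unfolding fb_llr_expectation_def by simp

lemma fb_llr_expectation_Suc:
  "fb_llr_expectation W q (Suc N) f h = (\<Sum>y\<in>UNIV. W (f 0 []) y *
      fb_llr_expectation W q N (\<lambda>n zs. f (Suc n) (y # zs)) (\<lambda>s. h (llr W q (f 0 []) y + s)))"
  unfolding fb_llr_expectation_def sum_lists_length_Suc prod.lessThan_Suc_shift sum.lessThan_Suc_shift
  by (simp add: sum_distrib_left mult.assoc)

lemma fb_llr_expectation_eq_constant_encoder:
  fixes W :: "'x::finite \<Rightarrow> 'y::finite \<Rightarrow> real"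
  assumes "gallager_symmetric W" and "respects_column_perms W q"
  shows "fb_llr_expectation W q N f h = fb_llr_expectation W q N (\<lambda>_ _. xo) h"
proof (induction N arbitrary: f h)
  case 0
  show ?case by (simp add: fb_llr_expectation_0)
next
  case (Suc N)
  \<comment> \<open>\<open>llr W q x y\<close> depends on \<open>x\<close> and \<open>y\<close> only through \<open>W x y\<close> and \<open>q y\<close>, so the
    symmetry of sums over the outputs applies to the first step.\<close>
  define \<Phi> where "\<Phi> w t = w * fb_llr_expectation W q N (\<lambda>_ _. xo)
      (\<lambda>s. h ((if w = 0 then -\<infinity> else if t = 0 then \<infinity> else ereal (ln (w / t))) + s))"
    for w t
  have llr_step: "W x y * fb_llr_expectation W q N (\<lambda>_ _. xo) (\<lambda>s. h (llr W q x y + s))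
      = \<Phi> (W x y) (q y)" for x y
    unfolding \<Phi>_def llr_def ..
  have "fb_llr_expectation W q (Suc N) f h = (\<Sum>y\<in>UNIV. \<Phi> (W (f 0 []) y) (q y))"
    unfolding fb_llr_expectation_Suc Suc.IH[of "\<lambda>n zs. f (Suc n) (_ # zs)"] llr_step ..
  also have "\<dots> = (\<Sum>y\<in>UNIV. \<Phi> (W xo y) (q y))"
    using gallager_symmetric_sum_row_independent[OF assms] .
  also have "\<dots> = fb_llr_expectation W q (Suc N) (\<lambda>_ _. xo) h"
    unfolding fb_llr_expectation_Suc llr_step ..
  finally show ?case .
qed

lemma fb_llr_expectation_encoder_independent:
  fixes W :: "'x::finite \<Rightarrow> 'y::finite \<Rightarrow> real"
  assumes "gallager_symmetric W" and "respects_column_perms W q"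
  shows "fb_llr_expectation W q N f h = fb_llr_expectation W q N g h"
  using fb_llr_expectation_eq_constant_encoder[OF assms, of N f h undefined]
    fb_llr_expectation_eq_constant_encoder[OF assms, of N g h undefined]
  by (rule trans[OF _ sym])

lemma Pfb_Sfb_eq_fb_llr_expectation:
  fixes W :: "'x::finite \<Rightarrow> 'y::finite \<Rightarrow> real"
  shows "Pfb W N f m (Sfb W R N f m r) = fb_llr_expectation W (qR W R) N (\<lambda>n. f n m)
     (\<lambda>s. if ereal (1 / real N) * s \<le> ereal r - eSP W R r then 1 else 0)"
proof -
  have "Sfb W R N f m r = {ys \<in> {ys. length ys = N}. ereal (1 / real N) *
      (\<Sum>n<N. llr W (qR W R) (f n m (take n ys)) (ys ! n)) \<le> ereal r - eSP W R r}"
    unfolding Sfb_def by simp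
  moreover have "finite {ys :: 'y list. length ys = N}"
    using finite_lists_length_eq[of "UNIV :: 'y set" N] by simp
  ultimately show ?thesis
    unfolding Pfb_def fb_llr_expectation_def
    by (simp add: sum.inter_filter[symmetric]
        if_distrib[of "\<lambda>t. _ * t"] cong: if_cong)
qed

lemma Pseq_Sseq_eq_Pfb_Sfb:
  "Pseq W N xs (Sseq W R N xs r) = Pfb W N (\<lambda>n _ _. xs ! n) m (Sfb W R N (\<lambda>n _ _. xs ! n) m r)"
  unfolding Pseq_def Sseq_def Pfb_def Sfb_def ..

theorem lemma3:
  fixes W :: "'x::finite \<Rightarrow> 'y::finite \<Rightarrow> real" and R :: real
  assumes "stochastic W"
    and "gallager_symmetric W"
    and "Rcr W < capacity W"
    and "\<forall>y. \<exists>x. W x y \<noteq> 0"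
    and "Rinf W < R" and "R < capacity W"
  shows "(\<forall>lam::real. \<forall>x x'. Mgf W R x lam \<noteq> \<infinity> \<and> Mgf W R x lam = Mgf W R x' lam) \<and>
         (\<forall>(xo::'x) (N::nat) (f :: nat \<Rightarrow> 'm \<Rightarrow> 'y list \<Rightarrow> 'x) (M :: 'm set) (m::'m) (r::real).
            1 \<le> N \<longrightarrow> finite M \<longrightarrow> exp (real N * R) \<le> real (card M) \<longrightarrow> m \<in> M \<longrightarrow>
            0 \<le> r \<longrightarrow> r \<le> R \<longrightarrow> esp_set W R r \<noteq> {} \<longrightarrow>
            Pfb W N f m (Sfb W R N f m r) =
            Pseq W N (replicate N xo) (Sseq W R N (replicate N xo) r))"
proof (intro conjI allI impI)
  fix lam :: real and x x' :: 'x
  show "Mgf W R x lam \<noteq> \<infinity>"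
    by (rule Mgf_finite)
  show "Mgf W R x lam = Mgf W R x' lam"
    unfolding Mgf_eq_sum_UNIV
    by (rule gallager_symmetric_sum_row_independent[OF assms(2) respects_column_perms_qR])
next
  fix xo :: 'x and N :: nat and f :: "nat \<Rightarrow> 'm \<Rightarrow> 'y list \<Rightarrow> 'x" and M m r
  show "Pfb W N f m (Sfb W R N f m r) = Pseq W N (replicate N xo) (Sseq W R N (replicate N xo) r)"
    unfolding Pseq_Sseq_eq_Pfb_Sfb[where m = m] Pfb_Sfb_eq_fb_llr_expectation
    by (rule fb_llr_expectation_encoder_independent[OF assms(2) respects_column_perms_qR])
qed

end
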